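(* Let $\mathfrak V$ be an abstract h-strong super operator space. Then for each $n$ there exist an (ungraded) Hilbert space $\mathcal H_n$ and a linear map $\nu:M_n(\mathfrak V)\to\mathcal B(\mathcal H_n)$ with $\nu(x^* )=\nu(x)^\dagger$ (ordinary adjoint) which is strongly contractive, i.e. $\sup_{\Vert\xi\Vert\le1}|\langle\nu(x)\xi,\xi\rangle|\le\Vert x\Vert^s_n$ for all $x\in M_n(\mathfrak V)$, and hermitian isometric, i.e. $\Vert\nu(x)\Vert=\Vert x\Vert^s_n$ for all $x\in M_n(\mathfrak V)$ with $x=x^*$.
   Context: Let $\mathfrak V$ be a complex vector space with an antilinear involution $v\mapsto v^*$; on $M_n(\mathfrak V)$ put $[x_{ij}]^*=[x_{ji}^*]$. A strong matrix norm is a sequence of norms $\Vert\cdot\Vert^s_n$ on $M_n(\mathfrak V)$ satisfying $(\Sigma M1)$: $\Vert x\oplus y\Vert^s_{n+m}=\max\{\Vert x\Vert^s_n,\Vert y\Vert^s_m\}$, and $(\Sigma M2)$: $\Vert\alpha x\overline\alpha\Vert^s_n\le\Vert\alpha\Vert^2\Vert x\Vert^s_r$ for $\alpha\in M_{n,r}(\mathbb C)$, $x\in M_r(\mathfrak V)$. The induced ordinary matrix norm is $\Vert x\Vert_n:=2\left\Vert\begin{pmatrix}0&x\\0&0\end{pmatrix}\right\Vert^s_{2n}$. An abstract h-strong super operator space is such a $\mathfrak V$ (a super operator space for the induced matrix norms) whose strong matrix norm satisfies $(\Sigma M1)$, $(\Sigma M2)$, for which the involution is strongly completely antiisometric ($\Vert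 x^*\Vert^s_n=\Vert x\Vert^s_n$ for all $n$ and $x\in M_n(\mathfrak V)$), and which satisfies $(h\Sigma M* )$: $\Vert x\Vert^s_n=2\left\Vert\begin{pmatrix}0&x\\0&0\end{pmatrix}\right\Vert^s_{2n}$ for every hermitian $x=x^*\in M_n(\mathfrak V)$. *)

theory Defs
  imports "HOL-Analysis.Analysis"
begin

text \<open>A matrix is a function of row and column index; an element of M_{n,m}
  is such a function vanishing outside the index range n x m.\<close>

type_synonym 'a mat = "nat \<Rightarrow> nat \<Rightarrow> 'a"

definition mats :: "nat \<Rightarrow> nat \<Rightarrow> ('a::zero) mat set" where
  "mats n m = {x. \<forall>i j. (n \<le> i \<or> m \<le> j) \<longrightarrow> x i j = 0}"

definition madd :: "('a::plus) mat \<Rightarrow> 'a mat \<Rightarrow> 'a mat" where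
  "madd x y = (\<lambda>i j. x i j + y i j)"

definition mscale :: "(complex \<Rightarrow> 'v \<Rightarrow> 'v) \<Rightarrow> complex \<Rightarrow> 'v mat \<Rightarrow> 'v mat" where
  "mscale smul c x = (\<lambda>i j. smul c (x i j))"

definition mstar :: "('v \<Rightarrow> 'v) \<Rightarrow> 'v mat \<Rightarrow> 'v mat" where
  "mstar st x = (\<lambda>i j. st (x j i))"

definition dsum :: "nat \<Rightarrow> nat \<Rightarrow> ('a::zero) mat \<Rightarrow> 'a mat \<Rightarrow> 'a mat" where
  "dsum n m x y = (\<lambda>i j.
     if i < n \<and> j < n then x i j
     else if n \<le> i \<and> i < n + m \<and> n \<le> j \<and> j < n + m then y (i - n) (j - n)
     else 0)"

text \<open>The 2n x 2n matrix [[0, x],[0, 0]] for x in M_n.\<close>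
definition corner :: "nat \<Rightarrow> ('a::zero) mat \<Rightarrow> 'a mat" where
  "corner n x = (\<lambda>i j. if i < n \<and> n \<le> j \<and> j < 2 * n then x i (j - n) else 0)"

definition cadj :: "complex mat \<Rightarrow> complex mat" where
  "cadj a = (\<lambda>i j. cnj (a j i))"

definition lmul :: "(complex \<Rightarrow> 'v::comm_monoid_add \<Rightarrow> 'v) \<Rightarrow> nat \<Rightarrow> complex mat \<Rightarrow> 'v mat \<Rightarrow> 'v mat" where
  "lmul smul r a x = (\<lambda>i j. \<Sum>k<r. smul (a i k) (x k j))"

definition rmul :: "(complex \<Rightarrow> 'v::comm_monoid_add \<Rightarrow> 'v) \<Rightarrow> nat \<Rightarrow> 'v mat \<Rightarrow> complex mat \<Rightarrow> 'v mat" where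
  "rmul smul r x b = (\<lambda>i j. \<Sum>k<r. smul (b k j) (x i k))"

definition cmat_norm :: "nat \<Rightarrow> nat \<Rightarrow> complex mat \<Rightarrow> real" where
  "cmat_norm n r a = Sup {sqrt (\<Sum>i<n. (cmod (\<Sum>k<r. a i k * v k))\<^sup>2) | v.
                           (\<Sum>k<r. (cmod (v k))\<^sup>2) \<le> 1}"

definition is_norm_on :: "(complex \<Rightarrow> 'v::ab_group_add \<Rightarrow> 'v) \<Rightarrow> 'v mat set \<Rightarrow> ('v mat \<Rightarrow> real) \<Rightarrow> bool" where
  "is_norm_on smul S N \<longleftrightarrow>
     (\<forall>x\<in>S. 0 \<le> N x \<and> (N x = 0 \<longleftrightarrow> x = (\<lambda>i j. 0))) \<and>
     (\<forall>x\<in>S. \<forall>y\<in>S. N (madd x y) \<le> N x + N y) \<and>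
     (\<forall>c. \<forall>x\<in>S. N (mscale smul c x) = cmod c * N x)"

definition antilinear_involution :: "(complex \<Rightarrow> 'v::ab_group_add \<Rightarrow> 'v) \<Rightarrow> ('v \<Rightarrow> 'v) \<Rightarrow> bool" where
  "antilinear_involution smul st \<longleftrightarrow>
     (\<forall>u v. st (u + v) = st u + st v) \<and>
     (\<forall>c v. st (smul c v) = smul (cnj c) (st v)) \<and>
     (\<forall>v. st (st v) = v)"

definition strong_matrix_norm :: "(complex \<Rightarrow> 'v::ab_group_add \<Rightarrow> 'v) \<Rightarrow> (nat \<Rightarrow> 'v mat \<Rightarrow> real) \<Rightarrow> bool" where
  "strong_matrix_norm smul sn \<longleftrightarrow>
     (\<forall>n. is_norm_on smul (mats n n) (sn n)) \<and>
     (\<forall>n m x y. x \<in> mats n n \<longrightarrow> y \<in> mats m m \<longrightarrow>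
        sn (n + m) (dsum n m x y) = max (sn n x) (sn m y)) \<and>
     (\<forall>n r a x. a \<in> mats n r \<longrightarrow> x \<in> mats r r \<longrightarrow>
        sn n (rmul smul r (lmul smul r a x) (cadj a)) \<le> (cmat_norm n r a)\<^sup>2 * sn r x)"

definition induced_norm :: "(nat \<Rightarrow> 'v::zero mat \<Rightarrow> real) \<Rightarrow> nat \<Rightarrow> 'v mat \<Rightarrow> real" where
  "induced_norm sn n x = 2 * sn (2 * n) (corner n x)"

definition ruan_matrix_norm :: "(complex \<Rightarrow> 'v::ab_group_add \<Rightarrow> 'v) \<Rightarrow> (nat \<Rightarrow> 'v mat \<Rightarrow> real) \<Rightarrow> bool" where
  "ruan_matrix_norm smul N \<longleftrightarrow>
     (\<forall>n. is_norm_on smul (mats n n) (N n)) \<and>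
     (\<forall>n m x y. x \<in> mats n n \<longrightarrow> y \<in> mats m m \<longrightarrow>
        N (n + m) (dsum n m x y) = max (N n x) (N m y)) \<and>
     (\<forall>n r a x b. a \<in> mats n r \<longrightarrow> x \<in> mats r r \<longrightarrow> b \<in> mats r n \<longrightarrow>
        N n (rmul smul r (lmul smul r a x) b) \<le> cmat_norm n r a * N r x * cmat_norm r n b)"

definition h_strong_super_operator_space ::
  "(complex \<Rightarrow> 'v::ab_group_add \<Rightarrow> 'v) \<Rightarrow> ('v \<Rightarrow> 'v) \<Rightarrow> (nat \<Rightarrow> 'v mat \<Rightarrow> real) \<Rightarrow> bool" where
  "h_strong_super_operator_space smul st sn \<longleftrightarrow>
     vector_space smul \<and>
     antilinear_involution smul st \<and>
     strong_matrix_norm smul sn \<and>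
     ruan_matrix_norm smul (induced_norm sn) \<and>
     (\<forall>n x. x \<in> mats n n \<longrightarrow> sn n (mstar st x) = sn n x) \<and>
     (\<forall>n x. x \<in> mats n n \<longrightarrow> mstar st x = x \<longrightarrow> sn n x = induced_norm sn n x)"

text \<open>A complex Hilbert space is given by a carrier H, a linear subspace of the
  function space 'j => complex (pointwise operations), with an inner product
  ip, linear in the first and conjugate-linear in the second argument, which
  is complete for the induced norm.\<close>

definition hnorm :: "('h \<Rightarrow> 'h \<Rightarrow> complex) \<Rightarrow> 'h \<Rightarrow> real" where
  "hnorm ip x = sqrt (Re (ip x x))"

definition hilbert_space :: "('j \<Rightarrow> complex) set \<Rightarrow> (('j \<Rightarrow> complex) \<Rightarrow> ('j \<Rightarrow> complex) \<Rightarrow> complex) \<Rightarrow> bool" where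
  "hilbert_space H ip \<longleftrightarrow>
     (\<lambda>_. 0) \<in> H \<and>
     (\<forall>x\<in>H. \<forall>y\<in>H. (\<lambda>j. x j + y j) \<in> H) \<and>
     (\<forall>c. \<forall>x\<in>H. (\<lambda>j. c * x j) \<in> H) \<and>
     (\<forall>x\<in>H. \<forall>y\<in>H. \<forall>z\<in>H. ip (\<lambda>j. x j + y j) z = ip x z + ip y z) \<and>
     (\<forall>c. \<forall>x\<in>H. \<forall>y\<in>H. ip (\<lambda>j. c * x j) y = c * ip x y) \<and>
     (\<forall>x\<in>H. \<forall>y\<in>H. ip y x = cnj (ip x y)) \<and>
     (\<forall>x\<in>H. 0 \<le> Re (ip x x) \<and> (ip x x = 0 \<longleftrightarrow> x = (\<lambda>_. 0))) \<and>
     (\<forall>X. (\<forall>k. X k \<in> H) \<longrightarrow>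
          (\<forall>e>0. \<exists>N. \<forall>k\<ge>N. \<forall>l\<ge>N. hnorm ip (\<lambda>j. X k j - X l j) < e) \<longrightarrow>
          (\<exists>L\<in>H. (\<lambda>k. hnorm ip (\<lambda>j. X k j - L j)) \<longlonglongrightarrow> 0))"

definition bounded_op :: "('j \<Rightarrow> complex) set \<Rightarrow> (('j \<Rightarrow> complex) \<Rightarrow> ('j \<Rightarrow> complex) \<Rightarrow> complex)
     \<Rightarrow> (('j \<Rightarrow> complex) \<Rightarrow> ('j \<Rightarrow> complex)) \<Rightarrow> bool" where
  "bounded_op H ip T \<longleftrightarrow>
     (\<forall>x\<in>H. T x \<in> H) \<and>
     (\<forall>x\<in>H. \<forall>y\<in>H. T (\<lambda>j. x j + y j) = (\<lambda>j. T x j + T y j)) \<and>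
     (\<forall>c. \<forall>x\<in>H. T (\<lambda>j. c * x j) = (\<lambda>j. c * T x j)) \<and>
     (\<exists>K. \<forall>x\<in>H. hnorm ip (T x) \<le> K * hnorm ip x)"

definition op_norm :: "('j \<Rightarrow> complex) set \<Rightarrow> (('j \<Rightarrow> complex) \<Rightarrow> ('j \<Rightarrow> complex) \<Rightarrow> complex)
     \<Rightarrow> (('j \<Rightarrow> complex) \<Rightarrow> ('j \<Rightarrow> complex)) \<Rightarrow> real" where
  "op_norm H ip T = Sup {hnorm ip (T x) | x. x \<in> H \<and> hnorm ip x \<le> 1}"

end

theory Submission
  imports Defs "HOL-Library.Function_Algebras"
begin

text \<open>Only two features of the strong norm are needed: it is a norm on \<open>M\<^sub>n(V)\<close> and
  \<open>\<parallel>x\<^sup>*\<parallel> = \<parallel>x\<parallel>\<close>. Then \<open>x \<mapsto> \<parallel>(x + x\<^sup>*)/2\<parallel>\<close> is real-sublinear, and the real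
  Hahn--Banach theorem (via Zorn's lemma on sublinear minorants) yields, for every hermitian
  \<open>h\<close>, a real-linear functional below it that equals \<open>\<parallel>h\<parallel>\<close> at \<open>h\<close>. Its complexification
  \<open>f x = g x - \<i> g (\<i> x)\<close> is a hermitian functional with \<open>|f| \<le> \<parallel>\<cdot>\<parallel>\<close> and \<open>f h = \<parallel>h\<parallel>\<close>.
  Each such \<open>f\<close> is a one-dimensional representation; their direct sum acts on \<open>\<ell>\<^sup>2\<close> as
  the diagonal operator with entries \<open>f\<^sub>j(x)\<close>, which respects the involution, has numerical
  radius at most \<open>\<parallel>x\<parallel>\<close>, and has norm exactly \<open>\<parallel>x\<parallel>\<close> at hermitian \<open>x\<close>.\<close>

section \<open>Hahn--Banach for sublinear functionals\<close>

locale real_linear_space = vector_space scale for scale :: "real \<Rightarrow> 'b::ab_group_add \<Rightarrow> 'b"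
begin

definition sublinear :: "('b \<Rightarrow> real) \<Rightarrow> bool" where
  "sublinear q \<longleftrightarrow>
     (\<forall>x y. q (x + y) \<le> q x + q y) \<and> (\<forall>c x. 0 \<le> c \<longrightarrow> q (scale c x) = c * q x)"

definition linear_functional :: "('b \<Rightarrow> real) \<Rightarrow> bool" where
  "linear_functional g \<longleftrightarrow> (\<forall>x y. g (x + y) = g x + g y) \<and> (\<forall>c x. g (scale c x) = c * g x)"

lemma sublinear_add: "sublinear q \<Longrightarrow> q (x + y) \<le> q x + q y"
  unfolding sublinear_def by blast

lemma sublinear_scale: "sublinear q \<Longrightarrow> 0 \<le> c \<Longrightarrow> q (scale c x) = c * q x"
  unfolding sublinear_def by blast

lemma sublinear_zero: "sublinear q \<Longrightarrow> q 0 = 0"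
  using sublinear_scale[of q 0 0] by simp

lemma sublinear_neg_le: "sublinear q \<Longrightarrow> - q (- x) \<le> q x"
  using sublinear_add[of q x "- x"] sublinear_zero[of q] by simp

lemma sublinearI:
  assumes "\<And>x y. q (x + y) \<le> q x + q y" and "q 0 = 0"
    and "\<And>c x. 0 < c \<Longrightarrow> q (scale c x) \<le> c * q x"
  shows "sublinear q"
  unfolding sublinear_def
proof (intro conjI allI impI)
  fix c :: real and x assume "0 \<le> c"
  show "q (scale c x) = c * q x"
  proof (cases "c = 0")
    case False
    with \<open>0 \<le> c\<close> have c: "0 < c" by simp
    have "q x = q (scale (1 / c) (scale c x))" using c by simp
    also have "\<dots> \<le> (1 / c) * q (scale c x)" by (rule assms(3)) (use c in simp)
    finally have "c * q x \<le> q (scale c x)"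
      using c by (metis mult.commute pos_le_divide_eq times_divide_eq_left mult_1)
    with assms(3)[OF c, of x] show ?thesis by simp
  qed (simp add: assms(2))
qed (use assms(1) in blast)

lemma linear_functional_add: "linear_functional g \<Longrightarrow> g (x + y) = g x + g y"
  unfolding linear_functional_def by blast

lemma linear_functional_scale: "linear_functional g \<Longrightarrow> g (scale c x) = c * g x"
  unfolding linear_functional_def by blast

lemma linear_functional_neg: "linear_functional g \<Longrightarrow> g (- x) = - g x"
  unfolding linear_functional_def by (metis mult_minus1 scale_minus_left scale_one)

text \<open>\<open>push_down y q\<close> is a sublinear minorant of \<open>q\<close> whose value at \<open>-y\<close> is at most
  \<open>-q y\<close>, so every linear functional below it attains \<open>q\<close> at \<open>y\<close>.\<close>

definition push_down :: "'b \<Rightarrow> ('b \<Rightarrow> real) \<Rightarrow> 'b \<Rightarrow> real" where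
  "push_down y q x = (INF t\<in>{0..}. q (x + scale t y) - t * q y)"

lemma push_down_lower_bound:
  assumes "sublinear q" "0 \<le> t"
  shows "- q (- x) \<le> q (x + scale t y) - t * q y"
proof -
  have "q (scale t y) \<le> q (x + scale t y) + q (- x)"
    using sublinear_add[OF assms(1), of "x + scale t y" "- x"] by simp
  then show ?thesis using sublinear_scale[OF assms] by simp
qed

lemma push_down_le:
  assumes "sublinear q" "0 \<le> t"
  shows "push_down y q x \<le> q (x + scale t y) - t * q y"
proof -
  have "bdd_below ((\<lambda>t. q (x + scale t y) - t * q y) ` {0..})"
    by (rule bdd_belowI2[where m = "- q (- x)"]) (simp add: push_down_lower_bound[OF assms(1)])
  with assms(2) show ?thesis unfolding push_down_def by (intro cINF_lower) auto
qed

lemma push_down_ge: "sublinear q \<Longrightarrow> - q (- x) \<le> push_down y q x"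
  unfolding push_down_def by (rule cINF_greatest) (auto intro: push_down_lower_bound)

lemma push_down_le_self: "sublinear q \<Longrightarrow> push_down y q x \<le> q x"
  using push_down_le[of q 0] by simp

lemma push_down_neg: "sublinear q \<Longrightarrow> push_down y q (- y) \<le> - q y"
  using push_down_le[of q 1 y "- y"] sublinear_zero[of q] by simp

lemma push_down_add:
  assumes q: "sublinear q"
  shows "push_down y q (x + z) \<le> push_down y q x + push_down y q z"
proof -
  have split: "push_down y q (x + z) - (q (z + scale t y) - t * q y) \<le> q (x + scale s y) - s * q y"
    if "0 \<le> s" "0 \<le> t" for s t
  proof -
    have "push_down y q (x + z) \<le> q ((x + scale s y) + (z + scale t y)) - (s + t) * q y"
      using push_down_le[OF q, of "s + t" y "x + z"] that
      by (simp add: algebra_simps)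
    also have "\<dots> \<le> q (x + scale s y) + q (z + scale t y) - (s + t) * q y"
      using sublinear_add[OF q] by simp
    finally show ?thesis by (simp add: algebra_simps)
  qed
  have "push_down y q (x + z) - (q (z + scale t y) - t * q y) \<le> push_down y q x" if "0 \<le> t" for t
    unfolding push_down_def[of y q x] by (rule cINF_greatest) (use split that in auto)
  then have "push_down y q (x + z) - push_down y q x \<le> push_down y q z"
    unfolding push_down_def[of y q z] by (intro cINF_greatest) (auto simp: algebra_simps)
  then show ?thesis by simp
qed

lemma push_down_scale_le:
  assumes q: "sublinear q" and c: "0 < c"
  shows "push_down y q (scale c x) \<le> c * push_down y q x"
proof -
  have "push_down y q (scale c x) / c \<le> q (x + scale t y) - t * q y" if "0 \<le> t" for t
  proof -
    have "scale c x + scale (c * t) y = scale c (x + scale t y)"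
      by (simp add: scale_right_distrib)
    then have "push_down y q (scale c x) \<le> q (scale c (x + scale t y)) - (c * t) * q y"
      using push_down_le[OF q, of "c * t" y "scale c x"] that c by simp
    also have "\<dots> = c * (q (x + scale t y) - t * q y)"
      by (simp only: sublinear_scale[OF q less_imp_le[OF c]] right_diff_distrib mult.assoc)
    finally show ?thesis by (metis c mult.commute pos_divide_le_eq)
  qed
  then have "push_down y q (scale c x) / c \<le> push_down y q x"
    unfolding push_down_def[of y q x] by (intro cINF_greatest) auto
  then show ?thesis by (metis c mult.commute pos_divide_le_eq)
qed

lemma sublinear_push_down:
  assumes q: "sublinear q"
  shows "sublinear (push_down y q)"
proof (rule sublinearI)
  show "push_down y q 0 = 0"
    using push_down_le_self[OF q, of y 0] push_down_ge[OF q, of 0 y] sublinear_zero[OF q] by simp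
qed (use push_down_add[OF q] push_down_scale_le[OF q] in auto)

lemma linear_if_minimal_sublinear:
  assumes m: "sublinear m"
    and minimal: "\<And>r. sublinear r \<Longrightarrow> (\<forall>x. r x \<le> m x) \<Longrightarrow> r = m"
  shows "linear_functional m"
proof -
  have odd: "m (- y) = - m y" for y
  proof -
    have "push_down y m = m"
      by (rule minimal[OF sublinear_push_down[OF m]]) (use push_down_le_self[OF m] in blast)
    then show ?thesis using push_down_neg[OF m, of y] sublinear_neg_le[OF m, of "- y"] by simp
  qed
  have "m x + m y \<le> m (x + y)" for x y
    using sublinear_add[OF m, of "x + y" "- y"] odd[of y] by simp
  then have add: "m (x + y) = m x + m y" for x y
    by (simp add: antisym sublinear_add[OF m])
  have "m (scale c x) = c * m x" for c x
  proof (cases "0 \<le> c")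
    case False
    then show ?thesis using sublinear_scale[OF m, of "- c" x] odd[of "scale c x"] by simp
  qed (rule sublinear_scale[OF m])
  with add show ?thesis unfolding linear_functional_def by blast
qed

lemma bdd_below_sublinear_minorants:
  assumes "\<forall>r\<in>C. sublinear r \<and> (\<forall>x. r x \<le> q x)"
  shows "bdd_below ((\<lambda>r. r x) ` C)"
proof (rule bdd_belowI2)
  fix r assume "r \<in> C"
  then show "- q (- x) \<le> r x"
    using assms sublinear_neg_le[of r x] by (meson neg_le_iff_le order_trans)
qed

lemma sublinear_Inf_chain:
  assumes C: "C \<noteq> {}" "\<forall>r\<in>C. sublinear r \<and> (\<forall>x. r x \<le> q x)"
    and chain: "\<forall>r\<in>C. \<forall>s\<in>C. (\<forall>x. r x \<le> s x) \<or> (\<forall>x. s x \<le> r x)"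
  shows "sublinear (\<lambda>x. INF r\<in>C. r x)" (is "sublinear ?u")
proof -
  have lower: "?u x \<le> r x" if "r \<in> C" for r x
    by (rule cINF_lower[OF bdd_below_sublinear_minorants[OF C(2)] that])
  show ?thesis
  proof (rule sublinearI)
    fix x y
    have "?u (x + y) - s y \<le> r x" if r: "r \<in> C" and s: "s \<in> C" for r s
    proof -
      have "?u (x + y) \<le> r x + r y" "?u (x + y) \<le> s x + s y"
        using lower[OF r] lower[OF s] C(2) r s sublinear_add by (meson order_trans)+
      from chain[rule_format, OF r s] show ?thesis
      proof
        assume "\<forall>x. r x \<le> s x"
        then have "r y \<le> s y" by blast
        with \<open>?u (x + y) \<le> r x + r y\<close> show ?thesis by linarith
      next
        assume "\<forall>x. s x \<le> r x"
        then have "s x \<le> r x" by blast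
        with \<open>?u (x + y) \<le> s x + s y\<close> show ?thesis by linarith
      qed
    qed
    then have "?u (x + y) - s y \<le> ?u x" if "s \<in> C" for s
      using that by (intro cINF_greatest[OF C(1)]) auto
    then have "?u (x + y) - ?u x \<le> ?u y"
      by (intro cINF_greatest[OF C(1)]) (auto simp: algebra_simps)
    then show "?u (x + y) \<le> ?u x + ?u y" by simp
  next
    have "?u 0 = (INF r\<in>C. 0)" by (rule INF_cong) (use C(2) sublinear_zero in auto)
    then show "?u 0 = 0" using C(1) by simp
  next
    fix c :: real and x assume c: "0 < c"
    have "?u (scale c x) / c \<le> r x" if "r \<in> C" for r
      using lower[OF that, of "scale c x"] sublinear_scale[of r c x] C(2) that c
      by (simp add: pos_divide_le_eq algebra_simps)
    then have "?u (scale c x) / c \<le> ?u x" by (intro cINF_greatest[OF C(1)])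
    then show "?u (scale c x) \<le> c * ?u x" using c by (simp add: pos_divide_le_eq algebra_simps)
  qed
qed

lemma exists_linear_functional_below:
  assumes q: "sublinear q"
  shows "\<exists>g. linear_functional g \<and> (\<forall>x. g x \<le> q x)"
proof -
  define A where "A = {r. sublinear r \<and> (\<forall>x. r x \<le> q x)}"
  define above where "above a b \<longleftrightarrow> (\<forall>x. b x \<le> (a x :: real))" for a b :: "'b \<Rightarrow> real"
  have po: "partial_order_on A (relation_of above A)"
    unfolding partial_order_on_def preorder_on_def refl_on_def trans_on_def antisym_on_def
      relation_of_def above_def
    by (auto intro: order_trans) (meson antisym ext)
  have "\<exists>u\<in>A. \<forall>a\<in>C. above a u" if "C \<in> Chains (relation_of above A)" for C
  proof (cases "C = {}")
    case True then show ?thesis using q by (auto simp: A_def above_def)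
  next
    case False
    have CA: "C \<subseteq> A" by (rule Chains_relation_of[OF that])
    have chain: "\<forall>r\<in>C. \<forall>s\<in>C. above r s \<or> above s r"
      using that unfolding Chains_def relation_of_def by auto
    let ?u = "\<lambda>x. INF r\<in>C. r x"
    have "sublinear ?u"
      by (rule sublinear_Inf_chain[OF False]) (use CA chain in \<open>auto simp: A_def above_def\<close>)
    have lower: "?u x \<le> r x" if "r \<in> C" for r x
      using that CA by (intro cINF_lower bdd_below_sublinear_minorants[where q = q]) (auto simp: A_def)
    obtain r0 where r0: "r0 \<in> C" using False by blast
    have "?u x \<le> q x" for x
    proof -
      have "r0 x \<le> q x" using CA r0 by (auto simp: A_def)
      with lower[OF r0, of x] show ?thesis by linarith
    qed
    with \<open>sublinear ?u\<close> have "?u \<in> A" by (simp add: A_def)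
    then show ?thesis unfolding above_def by (intro bexI[of _ ?u] ballI allI lower)
  qed
  then obtain m where m: "m \<in> A" and minimal: "\<forall>a\<in>A. above m a \<longrightarrow> a = m"
    using predicate_Zorn[OF po] by blast
  have "linear_functional m"
  proof (rule linear_if_minimal_sublinear)
    show "sublinear m" using m by (simp add: A_def)
    fix r assume r: "sublinear r" "\<forall>x. r x \<le> m x"
    have "r x \<le> q x" for x
      using r(2)[rule_format, of x] m by (auto simp: A_def intro: order_trans)
    with r(1) have "r \<in> A" by (simp add: A_def)
    with minimal r(2) show "r = m" by (simp add: above_def)
  qed
  with m show ?thesis by (auto simp: A_def)
qed

theorem Hahn_Banach_sublinear:
  assumes q: "sublinear q"
  shows "\<exists>g. linear_functional g \<and> (\<forall>x. g x \<le> q x) \<and> g h = q h"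
proof -
  obtain g where g: "linear_functional g" "\<forall>x. g x \<le> push_down h q x"
    using exists_linear_functional_below[OF sublinear_push_down[OF q]] by blast
  have below: "g x \<le> q x" for x
    using g(2) push_down_le_self[OF q, of h x] by (meson order_trans)
  have "- g h \<le> - q h"
    using g(2)[rule_format, of "- h"] push_down_neg[OF q, of h] linear_functional_neg[OF g(1)] by simp
  with below[of h] have "g h = q h" by simp
  with g(1) below show ?thesis by blast
qed

end

section \<open>The Hilbert space \<open>\<ell>\<^sup>2\<close> and diagonal operators\<close>

definition square_summable :: "('j \<Rightarrow> complex) \<Rightarrow> bool" where
  "square_summable x \<longleftrightarrow> (\<lambda>j. (cmod (x j))\<^sup>2) summable_on UNIV"

definition sum_squares :: "('j \<Rightarrow> complex) \<Rightarrow> real" where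
  "sum_squares x = infsum (\<lambda>j. (cmod (x j))\<^sup>2) UNIV"

definition l2_inner :: "('j \<Rightarrow> complex) \<Rightarrow> ('j \<Rightarrow> complex) \<Rightarrow> complex" where
  "l2_inner x y = infsum (\<lambda>j. x j * cnj (y j)) UNIV"

lemma norm_add_squared_le:
  fixes a b :: "'a::real_normed_vector"
  shows "(norm (a + b))\<^sup>2 \<le> 2 * (norm a)\<^sup>2 + 2 * (norm b)\<^sup>2"
proof -
  have "(norm (a + b))\<^sup>2 \<le> (norm a + norm b)\<^sup>2"
    by (simp add: power_mono norm_triangle_ineq)
  also have "\<dots> \<le> 2 * (norm a)\<^sup>2 + 2 * (norm b)\<^sup>2"
    using zero_le_power2[of "norm a - norm b"] unfolding power2_diff power2_sum by linarith
  finally show ?thesis .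
qed

lemma square_summable_add:
  assumes "square_summable x" "square_summable y"
  shows "square_summable (\<lambda>j. x j + y j)"
  unfolding square_summable_def
proof (rule summable_on_comparison_test)
  show "(\<lambda>j. 2 * (cmod (x j))\<^sup>2 + 2 * (cmod (y j))\<^sup>2) summable_on UNIV"
    using assms unfolding square_summable_def by (intro summable_on_add summable_on_cmult_right)
qed (auto simp: norm_add_squared_le)

lemma square_summable_scale:
  assumes "square_summable x"
  shows "square_summable (\<lambda>j. c * x j)"
  using summable_on_cmult_right[OF assms[unfolded square_summable_def], of "(cmod c)\<^sup>2"]
  unfolding square_summable_def by (simp add: norm_mult power_mult_distrib)

lemma square_summable_diff:
  assumes "square_summable x" "square_summable y"
  shows "square_summable (\<lambda>j. x j - y j)"
  using square_summable_add[OF assms(1) square_summable_scale[OF assms(2), of "-1"]] by simp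

lemma summable_on_l2_inner:
  assumes "square_summable x" "square_summable y"
  shows "(\<lambda>j. x j * cnj (y j)) summable_on UNIV"
proof -
  have bound: "norm (norm (x j * cnj (y j))) \<le> (cmod (x j))\<^sup>2 + (cmod (y j))\<^sup>2" for j
  proof -
    have "2 * (cmod (x j) * cmod (y j)) \<le> (cmod (x j))\<^sup>2 + (cmod (y j))\<^sup>2"
      using zero_le_power2[of "cmod (x j) - cmod (y j)"] unfolding power2_diff by linarith
    moreover have "0 \<le> cmod (x j) * cmod (y j)" by simp
    moreover have "norm (norm (x j * cnj (y j))) = cmod (x j) * cmod (y j)" by (simp add: norm_mult)
    ultimately show ?thesis by linarith
  qed
  have "(\<lambda>j. (cmod (x j))\<^sup>2 + (cmod (y j))\<^sup>2) summable_on UNIV"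
    using assms unfolding square_summable_def by (intro summable_on_add)
  then have "(\<lambda>j. norm (x j * cnj (y j))) summable_on UNIV"
    by (rule summable_on_comparison_test) (use bound in auto)
  then show ?thesis by (rule abs_summable_summable)
qed

lemma sum_squares_nonneg: "0 \<le> sum_squares x"
  unfolding sum_squares_def by (rule infsum_nonneg) simp

lemma finite_sum_squares_le:
  assumes "square_summable x" "finite F"
  shows "(\<Sum>j\<in>F. (cmod (x j))\<^sup>2) \<le> sum_squares x"
  unfolding sum_squares_def infsum_finite[OF assms(2), symmetric]
  using assms unfolding square_summable_def
  by (intro infsum_mono_neutral) (auto intro: summable_on_finite)

lemma square_summable_if_finite_sums_le:
  assumes "\<And>F. finite F \<Longrightarrow> (\<Sum>j\<in>F. (cmod (x j))\<^sup>2) \<le> B"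
  shows "square_summable x" and "sum_squares x \<le> B"
proof -
  show summable: "square_summable x"
    unfolding square_summable_def
    by (rule nonneg_bdd_above_summable_on) (auto intro!: bdd_aboveI2 assms)
  show "sum_squares x \<le> B"
    using summable assms unfolding sum_squares_def square_summable_def
    by (auto intro: infsum_le_finite_sums)
qed

lemma l2_inner_self:
  assumes "square_summable x"
  shows "l2_inner x x = of_real (sum_squares x)"
proof -
  have "l2_inner x x = infsum (\<lambda>j. of_real ((cmod (x j))\<^sup>2)) UNIV"
    unfolding l2_inner_def by (rule infsum_cong) (rule complex_norm_square[symmetric])
  also have "\<dots> = of_real (sum_squares x)"
    using assms unfolding square_summable_def sum_squares_def
    by (intro infsumI has_sum_of_real has_sum_infsum)
  finally show ?thesis .
qed

lemma hnorm_l2_inner: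
  "square_summable x \<Longrightarrow> hnorm l2_inner x = sqrt (sum_squares x)"
  by (simp add: hnorm_def l2_inner_self)

lemma hnorm_l2_inner_nonneg: "square_summable x \<Longrightarrow> 0 \<le> hnorm l2_inner x"
  by (simp add: hnorm_l2_inner sum_squares_nonneg)

lemma hnorm_l2_inner_squared:
  "square_summable x \<Longrightarrow> (hnorm l2_inner x)\<^sup>2 = sum_squares x"
  by (simp add: hnorm_l2_inner sum_squares_nonneg)

lemma hnorm_l2_scale:
  assumes "square_summable x"
  shows "hnorm l2_inner (\<lambda>j. a * x j) = cmod a * hnorm l2_inner x"
proof -
  have "sum_squares (\<lambda>j. a * x j) = (cmod a)\<^sup>2 * sum_squares x"
    using assms unfolding sum_squares_def square_summable_def
    by (simp add: norm_mult power_mult_distrib infsum_cmult_right)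
  then show ?thesis
    by (simp add: hnorm_l2_inner assms square_summable_scale real_sqrt_mult)
qed

lemma norm_le_hnorm_l2_inner:
  assumes "square_summable x"
  shows "cmod (x j) \<le> hnorm l2_inner x"
  using finite_sum_squares_le[OF assms, of "{j}"]
  by (simp add: hnorm_l2_inner[OF assms] real_le_rsqrt)

lemma l2_complete:
  fixes X :: "nat \<Rightarrow> 'j \<Rightarrow> complex"
  assumes X: "\<And>k. square_summable (X k)"
    and Cauchy: "\<forall>e>0. \<exists>N. \<forall>k\<ge>N. \<forall>l\<ge>N. hnorm l2_inner (\<lambda>j. X k j - X l j) < e"
  shows "\<exists>L. square_summable L \<and> (\<lambda>k. hnorm l2_inner (\<lambda>j. X k j - L j)) \<longlonglongrightarrow> 0"
proof -
  have "Cauchy (\<lambda>k. X k j)" for j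
  proof (rule metric_CauchyI)
    fix e :: real assume "0 < e"
    with Cauchy obtain N where N: "\<forall>k\<ge>N. \<forall>l\<ge>N. hnorm l2_inner (\<lambda>j. X k j - X l j) < e"
      by blast
    show "\<exists>N. \<forall>k\<ge>N. \<forall>l\<ge>N. dist (X k j) (X l j) < e"
    proof (intro exI allI impI)
      fix k l assume "N \<le> k" "N \<le> l"
      have "dist (X k j) (X l j) \<le> hnorm l2_inner (\<lambda>j. X k j - X l j)"
        unfolding dist_norm by (rule norm_le_hnorm_l2_inner[OF square_summable_diff[OF X X]])
      also have "\<dots> < e" by (rule N[rule_format, OF \<open>N \<le> k\<close> \<open>N \<le> l\<close>])
      finally show "dist (X k j) (X l j) < e" .
    qed
  qed
  then have "convergent (\<lambda>k. X k j)" for j by (simp add: Cauchy_convergent_iff)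
  define L where "L j = lim (\<lambda>k. X k j)" for j
  have lim: "(\<lambda>k. X k j) \<longlonglongrightarrow> L j" for j
    unfolding L_def by (rule convergent_LIMSEQ_iff[THEN iffD1]) fact
  have tail: "\<exists>N. \<forall>k\<ge>N. square_summable (\<lambda>j. X k j - L j) \<and>
      sum_squares (\<lambda>j. X k j - L j) \<le> e\<^sup>2" if "0 < e" for e
  proof -
    from Cauchy that obtain N where N: "\<forall>k\<ge>N. \<forall>l\<ge>N. hnorm l2_inner (\<lambda>j. X k j - X l j) < e"
      by blast
    have finite_sums: "(\<Sum>j\<in>F. (cmod (X k j - L j))\<^sup>2) \<le> e\<^sup>2" if "N \<le> k" "finite F" for k F
    proof (rule Lim_bounded[where M = N])
      show "(\<lambda>l. \<Sum>j\<in>F. (cmod (X k j - X l j))\<^sup>2) \<longlonglongrightarrow> (\<Sum>j\<in>F. (cmod (X k j - L j))\<^sup>2)"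
        by (intro tendsto_intros lim)
      show "\<forall>l\<ge>N. (\<Sum>j\<in>F. (cmod (X k j - X l j))\<^sup>2) \<le> e\<^sup>2"
      proof (intro allI impI)
        fix l assume "N \<le> l"
        have "hnorm l2_inner (\<lambda>j. X k j - X l j) \<le> e"
          using N[rule_format, OF \<open>N \<le> k\<close> \<open>N \<le> l\<close>] by simp
        then have "(hnorm l2_inner (\<lambda>j. X k j - X l j))\<^sup>2 \<le> e\<^sup>2"
          by (rule power_mono) (rule hnorm_l2_inner_nonneg[OF square_summable_diff[OF X X]])
        then show "(\<Sum>j\<in>F. (cmod (X k j - X l j))\<^sup>2) \<le> e\<^sup>2"
          using finite_sum_squares_le[OF square_summable_diff[OF X X] \<open>finite F\<close>, of k l]
          by (simp add: hnorm_l2_inner_squared[OF square_summable_diff[OF X X]])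
      qed
    qed
    show ?thesis
    proof (intro exI[of _ N] allI impI conjI)
      fix k assume "N \<le> k"
      show "square_summable (\<lambda>j. X k j - L j)" "sum_squares (\<lambda>j. X k j - L j) \<le> e\<^sup>2"
        using finite_sums[OF \<open>N \<le> k\<close>] by (fact square_summable_if_finite_sums_le)+
    qed
  qed
  obtain N where "\<forall>k\<ge>N. square_summable (\<lambda>j. X k j - L j) \<and> sum_squares (\<lambda>j. X k j - L j) \<le> 1\<^sup>2"
    using tail[of 1] by auto
  then have "square_summable (\<lambda>j. X N j - L j)" by simp
  from square_summable_diff[OF X[of N] this] have "square_summable L" by simp
  moreover have "(\<lambda>k. hnorm l2_inner (\<lambda>j. X k j - L j)) \<longlonglongrightarrow> 0"
  proof (rule LIMSEQ_I)
    fix r :: real assume "0 < r"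
    then obtain N where N: "\<forall>k\<ge>N. square_summable (\<lambda>j. X k j - L j) \<and>
        sum_squares (\<lambda>j. X k j - L j) \<le> (r / 2)\<^sup>2"
      using tail[of "r / 2"] by auto
    have "norm (hnorm l2_inner (\<lambda>j. X k j - L j) - 0) < r" if "N \<le> k" for k
    proof -
      have "(hnorm l2_inner (\<lambda>j. X k j - L j))\<^sup>2 \<le> (r / 2)\<^sup>2"
        using N that by (simp add: hnorm_l2_inner_squared)
      then have "hnorm l2_inner (\<lambda>j. X k j - L j) \<le> r / 2"
        by (rule power2_le_imp_le) (use \<open>0 < r\<close> in simp)
      moreover have "0 \<le> hnorm l2_inner (\<lambda>j. X k j - L j)"
        using N that by (simp add: hnorm_l2_inner_nonneg)
      ultimately show ?thesis using \<open>0 < r\<close> by simp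
    qed
    then show "\<exists>N. \<forall>k\<ge>N. norm (hnorm l2_inner (\<lambda>j. X k j - L j) - 0) < r" by auto
  qed
  ultimately show ?thesis by blast
qed

lemma hilbert_space_l2: "hilbert_space (Collect square_summable) l2_inner"
  unfolding hilbert_space_def Ball_def Bex_def mem_Collect_eq
proof (intro conjI allI impI)
  show "square_summable (\<lambda>_. 0 :: complex)" by (simp add: square_summable_def)
next
  fix x y :: "'j \<Rightarrow> complex" assume "square_summable x" "square_summable y"
  then show "square_summable (\<lambda>j. x j + y j)" by (rule square_summable_add)
next
  fix c and x :: "'j \<Rightarrow> complex" assume "square_summable x"
  then show "square_summable (\<lambda>j. c * x j)" by (rule square_summable_scale)
next
  fix x y z :: "'j \<Rightarrow> complex" assume "square_summable x" "square_summable y" "square_summable z"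
  then show "l2_inner (\<lambda>j. x j + y j) z = l2_inner x z + l2_inner y z"
    unfolding l2_inner_def by (simp add: distrib_right infsum_add summable_on_l2_inner)
next
  fix c and x y :: "'j \<Rightarrow> complex" assume "square_summable x" "square_summable y"
  then show "l2_inner (\<lambda>j. c * x j) y = c * l2_inner x y"
    unfolding l2_inner_def by (simp add: mult.assoc infsum_cmult_right summable_on_l2_inner)
next
  fix x y :: "'j \<Rightarrow> complex"
  show "l2_inner y x = cnj (l2_inner x y)"
    unfolding l2_inner_def infsum_cnj[symmetric] by (simp add: mult.commute)
next
  fix x :: "'j \<Rightarrow> complex" assume x: "square_summable x"
  show "0 \<le> Re (l2_inner x x)" by (simp add: l2_inner_self[OF x] sum_squares_nonneg)
  show "l2_inner x x = 0 \<longleftrightarrow> x = (\<lambda>_. 0)"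
  proof
    assume "l2_inner x x = 0"
    then have "cmod (x j) \<le> 0" for j
      using norm_le_hnorm_l2_inner[OF x, of j] by (simp add: hnorm_def)
    then show "x = (\<lambda>_. 0)" by auto
  qed (simp add: l2_inner_def)
next
  fix X :: "nat \<Rightarrow> 'j \<Rightarrow> complex"
  assume "\<forall>k. square_summable (X k)"
    "\<forall>e>0. \<exists>N. \<forall>k\<ge>N. \<forall>l\<ge>N. hnorm l2_inner (\<lambda>j. X k j - X l j) < e"
  then show "\<exists>L. square_summable L \<and> (\<lambda>k. hnorm l2_inner (\<lambda>j. X k j - L j)) \<longlonglongrightarrow> 0"
    by (intro l2_complete) auto
qed

definition mult_op :: "('j \<Rightarrow> complex) \<Rightarrow> ('j \<Rightarrow> complex) \<Rightarrow> 'j \<Rightarrow> complex" where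
  "mult_op c x = (\<lambda>j. c j * x j)"

lemma
  assumes c: "\<And>j. cmod (c j) \<le> K" and x: "square_summable x"
  shows square_summable_mult_op: "square_summable (mult_op c x)"
    and sum_squares_mult_op_le: "sum_squares (mult_op c x) \<le> K\<^sup>2 * sum_squares x"
proof -
  have "(\<Sum>j\<in>F. (cmod (mult_op c x j))\<^sup>2) \<le> K\<^sup>2 * sum_squares x" if "finite F" for F
  proof -
    have "(\<Sum>j\<in>F. (cmod (mult_op c x j))\<^sup>2) \<le> (\<Sum>j\<in>F. K\<^sup>2 * (cmod (x j))\<^sup>2)"
      using c by (intro sum_mono) (simp add: mult_op_def norm_mult power_mult_distrib
        mult_right_mono power_mono)
    also have "\<dots> \<le> K\<^sup>2 * sum_squares x"
      using finite_sum_squares_le[OF x that] by (simp add: sum_distrib_left[symmetric] mult_left_mono)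
    finally show ?thesis .
  qed
  then show "square_summable (mult_op c x)" "sum_squares (mult_op c x) \<le> K\<^sup>2 * sum_squares x"
    by (blast intro: square_summable_if_finite_sums_le)+
qed

lemma hnorm_mult_op_le:
  assumes c: "\<And>j. cmod (c j) \<le> K" and x: "square_summable x"
  shows "hnorm l2_inner (mult_op c x) \<le> K * hnorm l2_inner x"
proof -
  have "0 \<le> K" by (rule order_trans[OF norm_ge_zero c])
  have "(hnorm l2_inner (mult_op c x))\<^sup>2 \<le> (K * hnorm l2_inner x)\<^sup>2"
    using sum_squares_mult_op_le[OF c x]
    by (simp add: hnorm_l2_inner_squared square_summable_mult_op[OF c x] x power_mult_distrib)
  then show ?thesis
    by (rule power2_le_imp_le) (simp add: \<open>0 \<le> K\<close> hnorm_l2_inner_nonneg x)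
qed

lemma bounded_op_mult_op:
  assumes "\<And>j. cmod (c j) \<le> K"
  shows "bounded_op (Collect square_summable) l2_inner (mult_op c)"
  unfolding bounded_op_def mem_Collect_eq Ball_def
proof (intro conjI allI impI exI[of _ K])
  fix x :: "'a \<Rightarrow> complex" assume "square_summable x"
  then show "square_summable (mult_op c x)" "hnorm l2_inner (mult_op c x) \<le> K * hnorm l2_inner x"
    using square_summable_mult_op[of c K x] hnorm_mult_op_le[of c K x] assms by auto
qed (auto simp: mult_op_def distrib_left mult.left_commute)

lemma l2_inner_mult_op_cnj: "l2_inner (mult_op (\<lambda>j. cnj (c j)) x) y = l2_inner x (mult_op c y)"
  unfolding l2_inner_def mult_op_def by (simp add: mult.commute mult.left_commute)

lemma numerical_radius_mult_op_le:
  assumes c: "\<And>j. cmod (c j) \<le> K" and x: "square_summable x" "hnorm l2_inner x \<le> 1"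
  shows "cmod (l2_inner (mult_op c x) x) \<le> K"
proof -
  let ?f = "\<lambda>j. c j * x j * cnj (x j)"
  have "(\<lambda>j. norm (?f j)) summable_on UNIV"
    using summable_on_l2_inner[OF square_summable_mult_op[OF c x(1)] x(1)]
    by (simp add: mult_op_def summable_on_iff_abs_summable_on_complex)
  moreover have "(\<lambda>j. K * (cmod (x j))\<^sup>2) summable_on UNIV"
    using x(1) unfolding square_summable_def by (rule summable_on_cmult_right)
  moreover have "norm (?f j) \<le> K * (cmod (x j))\<^sup>2" for j
    using mult_right_mono[OF c[of j] zero_le_power2[of "cmod (x j)"]]
    by (simp add: norm_mult power2_eq_square mult.assoc)
  ultimately have "infsum (\<lambda>j. norm (?f j)) UNIV \<le> infsum (\<lambda>j. K * (cmod (x j))\<^sup>2) UNIV"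
    by (intro infsum_mono)
  moreover have "cmod (l2_inner (mult_op c x) x) \<le> infsum (\<lambda>j. norm (?f j)) UNIV"
    unfolding l2_inner_def mult_op_def by (rule norm_infsum_bound) fact
  ultimately have "cmod (l2_inner (mult_op c x) x) \<le> K * sum_squares x"
    using x(1) unfolding sum_squares_def square_summable_def by (simp add: infsum_cmult_right)
  also have "\<dots> \<le> K"
  proof (rule mult_left_le)
    show "sum_squares x \<le> 1"
      using power_mono[OF x(2) hnorm_l2_inner_nonneg[OF x(1)], of 2] by (simp add: hnorm_l2_inner_squared x(1))
    show "0 \<le> K" by (rule order_trans[OF norm_ge_zero c])
  qed
  finally show ?thesis .
qed

lemma
  shows square_summable_unit: "square_summable (\<lambda>j. if j = j0 then 1 else 0)"
    and hnorm_unit: "hnorm l2_inner (\<lambda>j. if j = j0 then 1 else 0) = 1"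
proof -
  have "((\<lambda>j. (cmod (if j = j0 then 1 else 0 :: complex))\<^sup>2) has_sum 1) UNIV"
    by (rule has_sum_finite_neutralI[of "{j0}"]) auto
  then show summable: "square_summable (\<lambda>j. if j = j0 then 1 else 0)"
    unfolding square_summable_def by (rule has_sum_imp_summable)
  from \<open>(_ has_sum 1) UNIV\<close> show "hnorm l2_inner (\<lambda>j. if j = j0 then 1 else 0) = 1"
    unfolding hnorm_l2_inner[OF summable] sum_squares_def by (simp add: infsumI)
qed

lemma op_norm_mult_op:
  assumes c: "\<And>j. cmod (c j) \<le> K" and attained: "cmod (c i) = K"
  shows "op_norm (Collect square_summable) l2_inner (mult_op c) = K"
  unfolding op_norm_def
proof (rule cSup_eq_maximum)
  let ?e = "\<lambda>j. if j = i then 1 else 0"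
  have "mult_op c ?e = (\<lambda>j. if j = i then c i else 0)"
    by (auto simp: mult_op_def)
  also have "\<dots> = (\<lambda>j. c i * ?e j)" by auto
  finally have "hnorm l2_inner (mult_op c ?e) = K"
    using attained by (simp add: hnorm_l2_scale square_summable_unit hnorm_unit)
  then show "K \<in> {hnorm l2_inner (mult_op c x) |x. x \<in> Collect square_summable \<and> hnorm l2_inner x \<le> 1}"
    using square_summable_unit[of i] hnorm_unit[of i] by force
next
  have "0 \<le> K" by (rule order_trans[OF norm_ge_zero c])
  fix r assume "r \<in> {hnorm l2_inner (mult_op c x) |x. x \<in> Collect square_summable \<and> hnorm l2_inner x \<le> 1}"
  then obtain x where x: "r = hnorm l2_inner (mult_op c x)" "square_summable x" "hnorm l2_inner x \<le> 1"
    by blast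
  have "r \<le> K * hnorm l2_inner x" using x hnorm_mult_op_le[of c K x] c by simp
  also have "\<dots> \<le> K" using mult_left_le[OF x(3) \<open>0 \<le> K\<close>] .
  finally show "r \<le> K" .
qed

section \<open>Norming hermitian functionals\<close>

locale star_seminormed_space = vector_space scale
  for scale :: "complex \<Rightarrow> 'w::ab_group_add \<Rightarrow> 'w" +
  fixes star :: "'w \<Rightarrow> 'w" and N :: "'w \<Rightarrow> real"
  assumes star_add: "star (x + y) = star x + star y"
    and star_scale: "star (scale c x) = scale (cnj c) (star x)"
    and star_star: "star (star x) = x"
    and N_add: "N (x + y) \<le> N x + N y"
    and N_scale: "N (scale c x) = cmod c * N x"
    and N_star: "N (star x) = N x"
begin

sublocale R: real_linear_space "\<lambda>r. scale (of_real r)"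
  by unfold_locales (simp_all add: scale_right_distrib scale_left_distrib)

definition hermitian_functional :: "('w \<Rightarrow> complex) \<Rightarrow> bool" where
  "hermitian_functional f \<longleftrightarrow>
     (\<forall>x y. f (x + y) = f x + f y) \<and> (\<forall>c x. f (scale c x) = c * f x) \<and>
     (\<forall>x. f (star x) = cnj (f x))"

definition real_part :: "'w \<Rightarrow> 'w" where
  "real_part x = scale (1 / 2) (x + star x)"

lemma N_zero: "N 0 = 0"
  using N_scale[of 0 0] by simp

lemma N_minus: "N (- x) = N x"
  using N_scale[of "-1" x] by simp

lemma N_nonneg: "0 \<le> N x"
  using N_add[of x "- x"] by (simp add: N_zero N_minus)

lemma star_minus: "star (- x) = - star x"
  using star_scale[of "-1" x] by simp

lemma star_diff: "star (x - y) = star x - star y"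
  using star_add[of x "- y"] by (simp add: star_minus)

lemma real_part_add: "real_part (x + y) = real_part x + real_part y"
  by (simp add: real_part_def star_add scale_right_distrib add_ac)

lemma real_part_scale_real: "real_part (scale (of_real r) x) = scale (of_real r) (real_part x)"
  by (simp add: real_part_def star_scale scale_right_distrib scale_left_commute)

lemma real_part_minus: "real_part (- x) = - real_part x"
  using real_part_scale_real[of "-1" x] by simp

lemma N_real_part_le: "N (real_part x) \<le> N x"
  using N_add[of x "star x"] by (simp add: real_part_def N_scale N_star)

lemma real_part_hermitian: "star x = x \<Longrightarrow> real_part x = x"
  by (simp add: real_part_def scale_right_distrib scale_left_distrib[symmetric])

lemma real_part_imaginary: "star x = x \<Longrightarrow> real_part (scale \<i> x) = 0"
  by (simp add: real_part_def star_scale scale_left_distrib[symmetric])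

lemma real_part_star_diff: "real_part (x - star x) = 0"
  by (simp add: real_part_def star_diff star_star)

lemma sublinear_N_real_part: "R.sublinear (\<lambda>x. N (real_part x))"
  unfolding R.sublinear_def
  by (simp add: real_part_add real_part_scale_real N_add N_scale)

lemma vanishes_if_real_part_zero:
  assumes g: "R.linear_functional g" "\<forall>x. g x \<le> N (real_part x)" and z: "real_part z = 0"
  shows "g z = 0"
  using g(2)[rule_format, of z] g(2)[rule_format, of "- z"] z
  by (simp add: real_part_minus N_zero R.linear_functional_neg[OF g(1)])

definition complexify :: "('w \<Rightarrow> real) \<Rightarrow> 'w \<Rightarrow> complex" where
  "complexify g x = of_real (g x) - \<i> * of_real (g (scale \<i> x))"

lemma Re_complexify [simp]: "Re (complexify g x) = g x"
  by (simp add: complexify_def)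

lemma complexify_add:
  "R.linear_functional g \<Longrightarrow> complexify g (x + y) = complexify g x + complexify g y"
  by (simp add: complexify_def scale_right_distrib R.linear_functional_add algebra_simps)

lemma linear_functional_scale_complex:
  assumes g: "R.linear_functional g"
  shows "g (scale c x) = Re c * g x + Im c * g (scale \<i> x)"
proof -
  have "scale c x = scale (of_real (Re c)) x + scale (of_real (Im c)) (scale \<i> x)"
    by (subst complex_eq[of c]) (simp add: scale_left_distrib mult.commute)
  then show ?thesis
    by (simp only: R.linear_functional_add[OF g] R.linear_functional_scale[OF g])
qed

lemma complexify_scale:
  assumes g: "R.linear_functional g"
  shows "complexify g (scale c x) = c * complexify g x"
proof -
  have "g (scale \<i> (scale c x)) = g (scale c (scale \<i> x))"
    by (metis scale_left_commute)
  also have "\<dots> = Re c * g (scale \<i> x) + Im c * g (scale \<i> (scale \<i> x))"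
    by (rule linear_functional_scale_complex[OF g])
  finally have "g (scale \<i> (scale c x)) = Re c * g (scale \<i> x) - Im c * g x"
    by (simp add: R.linear_functional_neg[OF g])
  then show ?thesis
    by (simp add: complexify_def linear_functional_scale_complex[OF g, of c x] complex_eq_iff
        algebra_simps)
qed

lemma complexify_star:
  assumes g: "R.linear_functional g" "\<forall>x. g x \<le> N (real_part x)"
  shows "complexify g (star x) = cnj (complexify g x)"
proof -
  have star_invariant: "g (star y) = g y" for y
    using vanishes_if_real_part_zero[OF g real_part_star_diff, of y]
      R.linear_functional_neg[OF g(1)] g(1)
    unfolding R.linear_functional_def by (metis diff_conv_add_uminus eq_iff_diff_eq_0)
  have "scale \<i> (star x) = - star (scale \<i> x)"
    by (simp add: star_scale)
  then have "g (scale \<i> (star x)) = - g (scale \<i> x)"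
    by (simp add: R.linear_functional_neg[OF g(1)] star_invariant)
  then show ?thesis by (simp add: complexify_def star_invariant complex_eq_iff)
qed

lemma norm_complexify_le:
  assumes g: "R.linear_functional g" "\<forall>x. g x \<le> N (real_part x)"
  shows "cmod (complexify g x) \<le> N x"
proof (cases "complexify g x = 0")
  case True
  then show ?thesis by (simp add: N_nonneg)
next
  case False
  define u where "u = cnj (complexify g x) / cmod (complexify g x)"
  \<comment> \<open>rotating \<open>x\<close> by the phase \<open>u\<close> makes the value real and nonnegative\<close>
  have "complexify g (scale u x) = cnj (complexify g x) * complexify g x / cmod (complexify g x)"
    by (simp add: complexify_scale[OF g(1)] u_def)
  also have "cnj (complexify g x) * complexify g x = of_real ((cmod (complexify g x))\<^sup>2)"
    by (metis complex_norm_square mult.commute)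
  also have "\<dots> / cmod (complexify g x) = of_real (cmod (complexify g x))"
    using False by (simp add: power2_eq_square)
  finally have "cmod (complexify g x) = g (scale u x)"
    using Re_complexify[of g "scale u x"] by simp
  also have "\<dots> \<le> N (scale u x)"
    using g(2)[rule_format, of "scale u x"] N_real_part_le[of "scale u x"] by linarith
  also have "\<dots> = N x"
    using False by (simp add: N_scale u_def norm_divide)
  finally show ?thesis .
qed

theorem exists_norming_hermitian_functional:
  "\<exists>f. hermitian_functional f \<and> (\<forall>x. cmod (f x) \<le> N x) \<and> (star h = h \<longrightarrow> f h = of_real (N h))"
proof -
  obtain g where g: "R.linear_functional g" "\<forall>x. g x \<le> N (real_part x)"
    and norming: "g h = N (real_part h)"
    using R.Hahn_Banach_sublinear[OF sublinear_N_real_part] by blast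
  have "complexify g h = of_real (N h)" if "star h = h"
    using vanishes_if_real_part_zero[OF g real_part_imaginary[OF that]] norming
    by (simp add: complexify_def real_part_hermitian[OF that])
  then show ?thesis
    using complexify_add[OF g(1)] complexify_scale[OF g(1)] complexify_star[OF g]
      norm_complexify_le[OF g]
    unfolding hermitian_functional_def by blast
qed

lemma exists_norming_family:
  assumes "inj e"
  shows "\<exists>F. (\<forall>j. hermitian_functional (F j)) \<and> (\<forall>j x. cmod (F j x) \<le> N x) \<and>
    (\<forall>h. star h = h \<longrightarrow> F (e h) h = of_real (N h))"
proof -
  have "\<forall>j. \<exists>f. hermitian_functional f \<and> (\<forall>x. cmod (f x) \<le> N x) \<and>
      (star (inv e j) = inv e j \<longrightarrow> f (inv e j) = of_real (N (inv e j)))"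
    by (intro allI exists_norming_hermitian_functional)
  from choice[OF this] obtain F where F: "\<forall>j. hermitian_functional (F j) \<and>
      (\<forall>x. cmod (F j x) \<le> N x) \<and>
      (star (inv e j) = inv e j \<longrightarrow> F j (inv e j) = of_real (N (inv e j)))"
    by blast
  have "F (e h) h = of_real (N h)" if "star h = h" for h
    using F that inv_f_f[OF assms, of h] by metis
  with F show ?thesis by blast
qed

lemma diagonal_representation:
  fixes F :: "'j \<Rightarrow> 'w \<Rightarrow> complex"
  assumes F: "\<And>j. hermitian_functional (F j)" and bound: "\<And>j x. cmod (F j x) \<le> N x"
  defines "\<nu> \<equiv> \<lambda>x. mult_op (\<lambda>j. F j x)"
  shows "bounded_op (Collect square_summable) l2_inner (\<nu> x)"
    and "\<nu> (x + y) \<xi> = (\<lambda>j. \<nu> x \<xi> j + \<nu> y \<xi> j)"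
    and "\<nu> (scale c x) \<xi> = (\<lambda>j. c * \<nu> x \<xi> j)"
    and "l2_inner (\<nu> (star x) \<xi>) \<eta> = l2_inner \<xi> (\<nu> x \<eta>)"
    and "square_summable \<xi> \<Longrightarrow> hnorm l2_inner \<xi> \<le> 1 \<Longrightarrow> cmod (l2_inner (\<nu> x \<xi>) \<xi>) \<le> N x"
    and "F j x = of_real (N x) \<Longrightarrow> op_norm (Collect square_summable) l2_inner (\<nu> x) = N x"
proof -
  show "bounded_op (Collect square_summable) l2_inner (\<nu> x)"
    unfolding \<nu>_def by (rule bounded_op_mult_op[OF bound])
  show "\<nu> (x + y) \<xi> = (\<lambda>j. \<nu> x \<xi> j + \<nu> y \<xi> j)"
    using F by (simp add: \<nu>_def mult_op_def hermitian_functional_def distrib_right)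
  show "\<nu> (scale c x) \<xi> = (\<lambda>j. c * \<nu> x \<xi> j)"
    using F by (simp add: \<nu>_def mult_op_def hermitian_functional_def mult.assoc)
  show "l2_inner (\<nu> (star x) \<xi>) \<eta> = l2_inner \<xi> (\<nu> x \<eta>)"
    using F l2_inner_mult_op_cnj[of "\<lambda>j. F j x"] by (simp add: \<nu>_def hermitian_functional_def)
  show "cmod (l2_inner (\<nu> x \<xi>) \<xi>) \<le> N x" if "square_summable \<xi>" "hnorm l2_inner \<xi> \<le> 1"
    unfolding \<nu>_def by (rule numerical_radius_mult_op_le[OF bound that])
  show "op_norm (Collect square_summable) l2_inner (\<nu> x) = N x" if "F j x = of_real (N x)"
    unfolding \<nu>_def by (rule op_norm_mult_op[where i = j, OF bound]) (simp add: that N_nonneg)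
qed

end

section \<open>Matrices over an h-strong super operator space\<close>

text \<open>\<open>sn n\<close> is a norm only on \<open>mats n n\<close>; precomposed with truncation to the upper left
  \<open>n \<times> n\<close> block it becomes a seminorm on all matrices.\<close>

definition restrict_mat :: "nat \<Rightarrow> ('a::zero) mat \<Rightarrow> 'a mat" where
  "restrict_mat n x = (\<lambda>i j. if i < n \<and> j < n then x i j else 0)"

lemma restrict_mat_in_mats: "restrict_mat n x \<in> mats n n"
  by (simp add: restrict_mat_def mats_def)

lemma restrict_mat_id: "x \<in> mats n n \<Longrightarrow> restrict_mat n x = x"
  by (auto simp: restrict_mat_def mats_def fun_eq_iff)

lemma madd_eq_plus: "madd x y = x + y"
  by (simp add: madd_def fun_eq_iff)

lemma vector_space_mscale:
  assumes "vector_space smul"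
  shows "vector_space (mscale smul)"
  using assms unfolding vector_space_def mscale_def by (simp add: fun_eq_iff)

lemma star_seminormed_space_mats:
  assumes "h_strong_super_operator_space smul st sn"
  shows "star_seminormed_space (mscale smul) (mstar st) (\<lambda>x. sn n (restrict_mat n x))"
proof -
  from assms have V: "vector_space smul" and st: "antilinear_involution smul st"
    and norm: "is_norm_on smul (mats n n) (sn n)"
    and star_inv: "\<And>x. x \<in> mats n n \<Longrightarrow> sn n (mstar st x) = sn n x"
    unfolding h_strong_super_operator_space_def strong_matrix_norm_def by auto
  have st_add: "st (u + v) = st u + st v" and st_smul: "st (smul c v) = smul (cnj c) (st v)"
    and st_st: "st (st v) = v" for u v c
    using st unfolding antilinear_involution_def by blast+
  have st_zero: "st 0 = 0"
    using st_add[of 0 0] by simp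
  have smul_zero: "smul c 0 = 0" for c
    using V unfolding vector_space_def by (metis add_cancel_right_right add_0)
  have restrict_add: "restrict_mat n (x + y) = madd (restrict_mat n x) (restrict_mat n y)"
    for x y :: "'a mat"
    by (simp add: restrict_mat_def madd_def fun_eq_iff)
  have restrict_scale: "restrict_mat n (mscale smul c x) = mscale smul c (restrict_mat n x)" for c x
    by (simp add: restrict_mat_def mscale_def fun_eq_iff smul_zero)
  have restrict_star: "restrict_mat n (mstar st x) = mstar st (restrict_mat n x)" for x
    by (auto simp: restrict_mat_def mstar_def fun_eq_iff st_zero)
  show ?thesis
  proof (rule star_seminormed_space.intro[OF vector_space_mscale[OF V]], unfold_locales)
    fix x y :: "'a mat" and c
    show "mstar st (x + y) = mstar st x + mstar st y"
      by (simp add: mstar_def fun_eq_iff st_add)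
    show "mstar st (mscale smul c x) = mscale smul (cnj c) (mstar st x)"
      by (simp add: mstar_def mscale_def fun_eq_iff st_smul)
    show "mstar st (mstar st x) = x"
      by (simp add: mstar_def fun_eq_iff st_st)
    show "sn n (restrict_mat n (x + y)) \<le> sn n (restrict_mat n x) + sn n (restrict_mat n y)"
      using norm restrict_mat_in_mats unfolding restrict_add is_norm_on_def by blast
    show "sn n (restrict_mat n (mscale smul c x)) = cmod c * sn n (restrict_mat n x)"
      using norm restrict_mat_in_mats unfolding restrict_scale is_norm_on_def by blast
    show "sn n (restrict_mat n (mstar st x)) = sn n (restrict_mat n x)"
      unfolding restrict_star by (rule star_inv[OF restrict_mat_in_mats])
  qed
qed

lemma inj_indicator_singleton: "inj (\<lambda>h. indicator {h} :: 'a \<Rightarrow> 'b::zero_neq_one)"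
proof (rule injI)
  fix a b :: 'a assume "(indicator {a} :: 'a \<Rightarrow> 'b) = indicator {b}"
  then have "(indicator {a} a :: 'b) = indicator {b} a" by simp
  then show "a = b" by (simp add: indicator_def split: if_splits)
qed

theorem mainTheorem7:
  fixes smul :: "complex \<Rightarrow> 'v::ab_group_add \<Rightarrow> 'v"
    and st :: "'v \<Rightarrow> 'v"
    and sn :: "nat \<Rightarrow> 'v mat \<Rightarrow> real"
    and n :: nat
  assumes "h_strong_super_operator_space smul st sn"
  shows "\<exists>(H :: ((('v mat) \<Rightarrow> complex) \<Rightarrow> complex) set) ip
            (\<nu> :: 'v mat \<Rightarrow> (((('v mat) \<Rightarrow> complex) \<Rightarrow> complex) \<Rightarrow> ((('v mat) \<Rightarrow> complex) \<Rightarrow> complex))).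
     hilbert_space H ip \<and>
     (\<forall>x\<in>mats n n. bounded_op H ip (\<nu> x)) \<and>
     (\<forall>x\<in>mats n n. \<forall>y\<in>mats n n. \<forall>\<xi>\<in>H.
        \<nu> (madd x y) \<xi> = (\<lambda>j. \<nu> x \<xi> j + \<nu> y \<xi> j)) \<and>
     (\<forall>c. \<forall>x\<in>mats n n. \<forall>\<xi>\<in>H. \<nu> (mscale smul c x) \<xi> = (\<lambda>j. c * \<nu> x \<xi> j)) \<and>
     (\<forall>x\<in>mats n n. \<forall>\<xi>\<in>H. \<forall>\<eta>\<in>H. ip (\<nu> (mstar st x) \<xi>) \<eta> = ip \<xi> (\<nu> x \<eta>)) \<and>
     (\<forall>x\<in>mats n n. \<forall>\<xi>\<in>H. hnorm ip \<xi> \<le> 1 \<longrightarrow> cmod (ip (\<nu> x \<xi>) \<xi>) \<le> sn n x) \<and>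
     (\<forall>x\<in>mats n n. mstar st x = x \<longrightarrow> op_norm H ip (\<nu> x) = sn n x)"
proof -
  interpret M: star_seminormed_space "mscale smul" "mstar st" "\<lambda>x. sn n (restrict_mat n x)"
    using star_seminormed_space_mats[OF assms] .
  \<comment> \<open>one norming state per matrix, indexed by the point masses \<open>indicator {h}\<close>\<close>
  obtain F :: "('v mat \<Rightarrow> complex) \<Rightarrow> 'v mat \<Rightarrow> complex"
    where F: "\<And>j. M.hermitian_functional (F j)" "\<And>j x. cmod (F j x) \<le> sn n (restrict_mat n x)"
      and norming: "\<And>h. mstar st h = h \<Longrightarrow> F (indicator {h}) h = of_real (sn n (restrict_mat n h))"
    using M.exists_norming_family[OF inj_indicator_singleton] by blast
  note rep = M.diagonal_representation[of F, OF F]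
  show ?thesis
  proof (intro exI[of _ "Collect square_summable"] exI[of _ l2_inner]
      exI[of _ "\<lambda>x. mult_op (\<lambda>j. F j x)"] conjI ballI allI impI)
    fix x :: "'v mat" assume x: "x \<in> mats n n"
    show "op_norm (Collect square_summable) l2_inner (mult_op (\<lambda>j. F j x)) = sn n x"
      if "mstar st x = x"
      using rep(6)[OF norming[OF that]] by (simp add: restrict_mat_id[OF x])
    show "\<xi> \<in> Collect square_summable \<Longrightarrow> hnorm l2_inner \<xi> \<le> 1 \<Longrightarrow>
        cmod (l2_inner (mult_op (\<lambda>j. F j x) \<xi>) \<xi>) \<le> sn n x" for \<xi>
      using rep(5)[of \<xi> x] by (simp add: restrict_mat_id[OF x])
  qed (simp_all add: hilbert_space_l2 rep(1-4) madd_eq_plus)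
qed

end
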